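(* Let $\kappa$ be a regular infinite cardinal and $\mu$ a singular cardinal with $\mathrm{cf}(\mu)=\kappa$. Then $\mathfrak b({}^{\mu}\kappa,\le_\kappa)=\mathfrak b({}^{\mu}\kappa,\le_{\mathrm{all}})=\kappa$ and $\mathfrak b({}^{\mu}\kappa,\le_\mu)=\mathfrak b({}^{\mu}\kappa,\le_{\mathrm{bd}})=\kappa^+$.
   Context: For $f,g\in{}^{\mu}\kappa$ (functions $\mu\to\kappa$): $f\le_{\mathrm{bd}}g$ if $\{\alpha<\mu: g(\alpha)<f(\alpha)\}$ is bounded in $\mu$; for a cardinal $\nu$, $f\le_\nu g$ if $|\{\alpha<\mu: g(\alpha)<f(\alpha)\}|<\nu$; $f\le_{\mathrm{all}}g$ if $f(\alpha)\le g(\alpha)$ for all $\alpha<\mu$. For such a relation $\le_\bullet$, $\mathfrak b({}^{\mu}\kappa,\le_\bullet)$ is the least size of a set $B\subseteq{}^{\mu}\kappa$ for which there is no $g\in{}^{\mu}\kappa$ with $f\le_\bullet g$ for all $f\in B$. *)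

theory Defs
  imports Main "HOL-Library.FuncSet"
begin

unbundle cardinal_syntax

(* Cardinals are represented as cardinal orders (initial-ordinal well-orders) r,
   with underlying set Field r; ordinals below the cardinal are elements of Field r. *)

definition cf_is :: "'m rel \<Rightarrow> 'c rel \<Rightarrow> bool" where
  "cf_is m c \<equiv> (\<exists>K. K \<subseteq> Field m \<and> cofinal K m \<and> (card_of K) =o c)
              \<and> (\<forall>K. K \<subseteq> Field m \<and> cofinal K m \<longrightarrow> c \<le>o (card_of K))"

definition funs :: "'m rel \<Rightarrow> 'k rel \<Rightarrow> ('m \<Rightarrow> 'k) set" where
  "funs m k = Field m \<rightarrow>\<^sub>E Field k"

definition below_set :: "'m rel \<Rightarrow> 'k rel \<Rightarrow> ('m \<Rightarrow> 'k) \<Rightarrow> ('m \<Rightarrow> 'k) \<Rightarrow> 'm set" where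
  "below_set m k f g = {\<alpha> \<in> Field m. (g \<alpha>, f \<alpha>) \<in> k \<and> g \<alpha> \<noteq> f \<alpha>}"

definition le_bd :: "'m rel \<Rightarrow> 'k rel \<Rightarrow> ('m \<Rightarrow> 'k) \<Rightarrow> ('m \<Rightarrow> 'k) \<Rightarrow> bool" where
  "le_bd m k f g \<longleftrightarrow> (\<exists>\<beta>\<in>Field m. \<forall>\<alpha>\<in>below_set m k f g. (\<alpha>, \<beta>) \<in> m)"

definition le_card :: "'n rel \<Rightarrow> 'm rel \<Rightarrow> 'k rel \<Rightarrow> ('m \<Rightarrow> 'k) \<Rightarrow> ('m \<Rightarrow> 'k) \<Rightarrow> bool" where
  "le_card \<nu> m k f g \<longleftrightarrow> (card_of (below_set m k f g)) <o \<nu>"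

definition le_all :: "'m rel \<Rightarrow> 'k rel \<Rightarrow> ('m \<Rightarrow> 'k) \<Rightarrow> ('m \<Rightarrow> 'k) \<Rightarrow> bool" where
  "le_all m k f g \<longleftrightarrow> (\<forall>\<alpha>\<in>Field m. (f \<alpha>, g \<alpha>) \<in> k)"

definition unbounded_family :: "('a \<Rightarrow> 'a \<Rightarrow> bool) \<Rightarrow> 'a set \<Rightarrow> 'a set \<Rightarrow> bool" where
  "unbounded_family R F B \<longleftrightarrow> B \<subseteq> F \<and> \<not> (\<exists>g\<in>F. \<forall>f\<in>B. R f g)"

definition bnum_is :: "('a \<Rightarrow> 'a \<Rightarrow> bool) \<Rightarrow> 'a set \<Rightarrow> 'c rel \<Rightarrow> bool" where
  "bnum_is R F c \<longleftrightarrow> (\<exists>B. unbounded_family R F B \<and> (card_of B) =o c)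
                     \<and> (\<forall>B. unbounded_family R F B \<longrightarrow> c \<le>o (card_of B))"

end

theory Submission
  imports Defs
begin

(* Lower bounds: fewer than k functions are dominated everywhere by their pointwise supremum,
   as k is regular. Any k functions f_i (i < k) are dominated modulo a bounded set: fix a
   cofinal k-sequence in m, send each point a of m to an index t(a) of the sequence lying above
   it, and let g(a) dominate the fewer than k values f_i(a) with i <= t(a); then f_i <= g outside
   the points a with t(a) < i, which are bounded in m because cf(m) = k. As <=_all implies <=_k
   and <=_bd implies <=_m, both bounds transfer.

   Upper bounds: the k constant functions are <=_k-unbounded, since m > k is not a union of k
   sets of size < k. For <=_m, split m into columns of size m indexed by k^+ and let the
   functions f_xi (xi <= eta) take pairwise distinct constant values on the column eta. If g
   bounded every f_xi modulo a set of size < m, a pigeonhole on a cofinal k-sequence of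
   cardinals below m yields k indices xi, all below some eta < k^+, whose exceptional sets are
   of size at most one lambda < m. Their union has size < m, yet it must cover the column eta:
   at any other point g would dominate k distinct values below k. *)

lemma Card_order_antisymD: "Card_order r \<Longrightarrow> (a, b) \<in> r \<Longrightarrow> (b, a) \<in> r \<Longrightarrow> a = b"
  by (metis Card_order_wo_rel wo_rel.ANTISYM antisymD)

lemma Card_order_transD: "Card_order r \<Longrightarrow> (a, b) \<in> r \<Longrightarrow> (b, c) \<in> r \<Longrightarrow> (a, c) \<in> r"
  by (metis Card_order_wo_rel wo_rel.TRANS transD)

lemma Card_order_notin_less:
  "Card_order r \<Longrightarrow> a \<in> Field r \<Longrightarrow> b \<in> Field r \<Longrightarrow> (a, b) \<notin> r \<Longrightarrow> (b, a) \<in> r \<and> b \<noteq> a"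
  by (metis Card_order_wo_rel wo_rel.TOTALS)

lemma card_of_under_ordLess:
  assumes "Card_order r" "infinite (Field r)" "a \<in> Field r"
  shows "|under r a| <o r"
proof -
  obtain b where b: "b \<in> Field r" "a \<noteq> b" "(a, b) \<in> r"
    using infinite_Card_order_limit[OF assms] by blast
  have "under r a \<subseteq> underS r b"
    unfolding under_def underS_def
    using b Card_order_transD[OF assms(1)] Card_order_antisymD[OF assms(1)] by blast
  then have "|under r a| \<le>o |underS r b|" by (rule card_of_mono1)
  also have "|underS r b| <o r" by (rule card_of_underS[OF assms(1) b(1)])
  finally show ?thesis .
qed

lemma not_cofinal_bounded:
  assumes "Card_order r" "S \<subseteq> Field r" "\<not> cofinal S r"
  shows "\<exists>a\<in>Field r. \<forall>b\<in>S. (b, a) \<in> r"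
  using assms Card_order_notin_less[OF assms(1)] unfolding cofinal_def by blast

lemma regularCard_small_bounded:
  assumes "Card_order r" "regularCard r" "S \<subseteq> Field r" "|S| <o r"
  shows "\<exists>a\<in>Field r. \<forall>b\<in>S. (b, a) \<in> r"
proof (rule not_cofinal_bounded[OF assms(1,3)])
  show "\<not> cofinal S r"
    using assms(2-4) not_ordLess_ordIso unfolding regularCard_def by blast
qed

lemma cf_is_small_bounded:
  assumes "Card_order m" "cf_is m k" "S \<subseteq> Field m" "|S| <o k"
  shows "\<exists>a\<in>Field m. \<forall>b\<in>S. (b, a) \<in> m"
proof (rule not_cofinal_bounded[OF assms(1,3)])
  show "\<not> cofinal S m"
    using assms(2-4) not_ordLess_ordLeq unfolding cf_is_def by blast
qed

lemma cf_is_ordLess_singular: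
  assumes "Card_order m" "\<not> regularCard m" "cf_is m k"
  shows "k <o m"
proof -
  obtain K where K: "K \<subseteq> Field m" "cofinal K m" "\<not> |K| =o m"
    using assms(2) unfolding regularCard_def by blast
  have k_K: "k \<le>o |K|" using assms(3) K(1,2) unfolding cf_is_def by blast
  have "|K| \<le>o m"
    using card_of_mono1[OF K(1)] card_of_Field_ordIso[OF assms(1)] by (rule ordLeq_ordIso_trans)
  then have "|K| <o m" using K(3) ordLeq_iff_ordLess_or_ordIso by blast
  with k_K show ?thesis by (rule ordLeq_ordLess_trans)
qed

lemma cardSuc_ordLess_singular:
  assumes "Card_order k" "infinite (Field k)" "Card_order m" "\<not> regularCard m" "k <o m"
  shows "cardSuc k <o m"
proof -
  have "cardSuc k \<le>o m" using cardSuc_least assms(1,3,5) by blast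
  moreover have "\<not> cardSuc k =o m"
    using regularCard_ordIso[OF _ _ infinite_cardSuc_regularCard] assms(1,2,4)
    by (metis Cinfinite_cardSuc cinfinite_def)
  ultimately show ?thesis using ordLeq_iff_ordLess_or_ordIso by blast
qed

lemma card_of_under_cardSuc:
  assumes "Card_order k" "infinite (Field k)" "\<eta> \<in> Field (cardSuc k)"
  shows "|under (cardSuc k) \<eta>| \<le>o k"
  using card_of_under_ordLess[OF cardSuc_Card_order[OF assms(1)] _ assms(3)]
    cardSuc_finite[OF assms(1)] assms(2) cardSuc_ordLeq_ordLess[OF assms(1) card_of_Card_order]
  by blast

lemma cofinal_card_of_bound:
  assumes "Card_order m" "cofinal K m" "|X| <o m"
  shows "\<exists>b\<in>K. |X| \<le>o |under m b|"
proof -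
  obtain a where a: "a \<in> Field m" "|X| =o Restr m (underS m a)"
    using ordLess_iff_ordIso_Restr[OF card_order_on_well_order_on[OF assms(1)] card_of_Well_order]
      assms(3) by blast
  obtain b where b: "b \<in> K" "(a, b) \<in> m"
    using assms(2) a(1) unfolding cofinal_def by blast
  have "|X| \<le>o |Field (Restr m (underS m a))|"
    using card_of_mono2[OF ordIso_imp_ordLeq[OF a(2)]] by (simp add: Field_card_of)
  also have "|Field (Restr m (underS m a))| \<le>o |underS m a|"
    by (rule card_of_mono1[OF Field_Restr_subset])
  also have "|underS m a| \<le>o |under m b|"
    using b(2) Card_order_transD[OF assms(1)] by (auto intro!: card_of_mono1 simp: underS_def under_def)
  finally show ?thesis using b(1) by blast
qed

lemma card_of_UNION_ordLess_bound:
  assumes "Card_order m" "infinite (Field m)" "infinite I" "|I| <o m" "|U| <o m"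
    and "\<forall>i\<in>I. |A i| \<le>o |U|"
  shows "|\<Union>i\<in>I. A i| <o m"
proof -
  have "\<forall>i\<in>I. |A i| \<le>o |I <+> U|"
    using assms(6) card_of_Plus2 ordLeq_transitive by blast
  then have "|\<Union>i\<in>I. A i| \<le>o |I <+> U|"
    using card_of_UNION_ordLeq_infinite[of "I <+> U" I A] assms(3) card_of_Plus1 by auto
  also have "|I <+> U| <o m"
    using card_of_Plus_ordLess_infinite_Field assms(1,2,4,5) by blast
  finally show ?thesis .
qed

lemma card_of_image_inj_on: "inj_on f A \<Longrightarrow> |f ` A| =o |A|"
  by (rule ordIso_symmetric, rule card_of_ordIso[THEN iffD1, OF exI, OF inj_on_imp_bij_betw])

lemma card_of_ordLeq_inj_Field:
  assumes "Card_order k" "|A| \<le>o k"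
  shows "\<exists>f. inj_on f A \<and> f ` A \<subseteq> Field k"
proof -
  have "|A| \<le>o |Field k|"
    using assms(2) ordIso_symmetric[OF card_of_Field_ordIso[OF assms(1)]] by (rule ordLeq_ordIso_trans)
  then show ?thesis by (rule card_of_ordLeq[THEN iffD2])
qed

lemma infinite_bij_betw_Times:
  assumes "infinite A" "B \<noteq> {}" "|B| \<le>o |A|"
  obtains p where "bij_betw p A (B \<times> A)"
proof -
  have "|A \<times> B| =o |A|" using card_of_Times_infinite[OF assms] by blast
  then have "|A| =o |B \<times> A|"
    using card_of_Times_commute ordIso_symmetric ordIso_transitive by blast
  from card_of_ordIso[THEN iffD2, OF this] show thesis using that by blast
qed

lemma card_of_inj_below_ordLess:
  assumes "Card_order k" "infinite (Field k)" "inj_on e B" "x \<in> Field k"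
  shows "|{f\<in>B. (e f, x) \<in> k}| <o k"
proof -
  have "inj_on e {f\<in>B. (e f, x) \<in> k}" using assms(3) by (rule inj_on_subset) blast
  moreover have "e ` {f\<in>B. (e f, x) \<in> k} \<subseteq> under k x" unfolding under_def by blast
  ultimately have "|{f\<in>B. (e f, x) \<in> k}| \<le>o |under k x|"
    using card_of_ordLeq[of "{f\<in>B. (e f, x) \<in> k}" "under k x"] by blast
  also have "|under k x| <o k" by (rule card_of_under_ordLess[OF assms(1,2,4)])
  finally show ?thesis .
qed

lemma card_of_fiber_ordIso:
  assumes "Card_order k" "infinite (Field k)" "|K| \<le>o k" "k <o |A|" "\<forall>\<xi>\<in>A. \<sigma> \<xi> \<in> K"
  shows "\<exists>b\<in>K. \<exists>Y\<subseteq>A. |Y| =o k \<and> (\<forall>\<xi>\<in>Y. \<sigma> \<xi> = b)"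
proof -
  have Fk: "|Field k| =o k" by (rule card_of_Field_ordIso[OF assms(1)])
  have "\<exists>b\<in>K. |Field k| <o |{\<xi>\<in>A. \<sigma> \<xi> = b}|"
  proof (rule ccontr)
    assume "\<not> ?thesis"
    then have fibers: "\<forall>b\<in>K. |{\<xi>\<in>A. \<sigma> \<xi> = b}| \<le>o |Field k|"
      using not_ordLeq_iff_ordLess[OF card_of_Well_order card_of_Well_order] by blast
    have "|K| \<le>o |Field k|"
      using assms(3) ordIso_symmetric[OF Fk] by (rule ordLeq_ordIso_trans)
    then have "|\<Union>b\<in>K. {\<xi>\<in>A. \<sigma> \<xi> = b}| \<le>o |Field k|"
      using fibers by (rule card_of_UNION_ordLeq_infinite[OF assms(2)])
    moreover have "(\<Union>b\<in>K. {\<xi>\<in>A. \<sigma> \<xi> = b}) = A" using assms(5) by blast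
    ultimately have "|A| \<le>o k" using Fk by (simp add: ordLeq_ordIso_trans)
    then show False using assms(4) not_ordLess_ordLeq by blast
  qed
  then obtain b where b: "b \<in> K" "|Field k| \<le>o |{\<xi>\<in>A. \<sigma> \<xi> = b}|"
    using ordLess_imp_ordLeq by blast
  from card_of_ordLeq[THEN iffD2, OF b(2)]
  obtain h where h: "inj_on h (Field k)" "h ` Field k \<subseteq> {\<xi>\<in>A. \<sigma> \<xi> = b}"
    by blast
  show ?thesis
  proof (intro bexI[OF _ b(1)] exI[of _ "h ` Field k"] conjI)
    show "|h ` Field k| =o k"
      using card_of_image_inj_on[OF h(1)] Fk by (rule ordIso_transitive)
  qed (use h(2) in auto)
qed

lemma Card_order_inj_image_unbounded:
  assumes "Card_order k" "infinite (Field k)" "|Y| =o k" "inj_on \<phi> Y" "\<phi> ` Y \<subseteq> Field k"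
    and "x \<in> Field k"
  shows "\<exists>y\<in>Y. (x, \<phi> y) \<in> k \<and> x \<noteq> \<phi> y"
proof (rule ccontr)
  assume "\<not> ?thesis"
  then have "\<phi> ` Y \<subseteq> under k x"
    using assms(5,6) Card_order_notin_less[OF assms(1)] by (fastforce simp: under_def)
  then have "|Y| <o k"
    using card_of_image_inj_on[OF assms(4)] card_of_mono1 card_of_under_ordLess[OF assms(1,2,6)]
    by (metis ordIso_ordLeq_trans ordIso_symmetric ordLeq_ordLess_trans)
  then show False using assms(3) not_ordLess_ordIso by blast
qed

lemma card_of_fst_fiber:
  assumes "bij_betw p A (S \<times> A)" "\<eta> \<in> S"
  shows "|A| \<le>o |{\<alpha>\<in>A. fst (p \<alpha>) = \<eta>}|"
proof (rule surj_imp_ordLeq)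
  show "A \<subseteq> (\<lambda>\<alpha>. snd (p \<alpha>)) ` {\<alpha>\<in>A. fst (p \<alpha>) = \<eta>}"
  proof
    fix \<beta> assume "\<beta> \<in> A"
    then obtain \<alpha> where "\<alpha> \<in> A" "p \<alpha> = (\<eta>, \<beta>)"
      using assms unfolding bij_betw_def by (metis SigmaI imageE)
    then show "\<beta> \<in> (\<lambda>\<alpha>. snd (p \<alpha>)) ` {\<alpha>\<in>A. fst (p \<alpha>) = \<eta>}" by force
  qed
qed

lemma le_all_imp_le_card:
  assumes "Card_order k" "Card_order \<nu>" "infinite (Field \<nu>)" "le_all m k f g"
  shows "le_card \<nu> m k f g"
proof -
  have "below_set m k f g = {}"
    using assms(4) Card_order_antisymD[OF assms(1)] unfolding below_set_def le_all_def by blast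
  moreover have "|{}| <o \<nu>"
    using finite_ordLess_infinite[OF card_of_Well_order card_order_on_well_order_on[OF assms(2)]]
      assms(3) Field_card_of[of "{}"] by (metis finite.emptyI)
  ultimately show ?thesis unfolding le_card_def by simp
qed

lemma le_bd_imp_le_card:
  assumes "Card_order m" "infinite (Field m)" "le_bd m k f g"
  shows "le_card m m k f g"
proof -
  obtain \<beta> where "\<beta> \<in> Field m" "below_set m k f g \<subseteq> under m \<beta>"
    using assms(3) unfolding le_bd_def under_def by blast
  then show ?thesis
    unfolding le_card_def using card_of_mono1 card_of_under_ordLess[OF assms(1,2)]
    by (blast intro: ordLeq_ordLess_trans)
qed

lemma bnum_isI:
  assumes "Card_order c"
    and "\<And>B. B \<subseteq> F \<Longrightarrow> |B| <o c \<Longrightarrow> \<exists>g\<in>F. \<forall>f\<in>B. R f g"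
    and "unbounded_family R F B\<^sub>0" "|B\<^sub>0| \<le>o c"
  shows "bnum_is R F c"
proof -
  have ge: "c \<le>o |B|" if "unbounded_family R F B" for B
    using that assms(2) not_ordLeq_iff_ordLess[OF card_of_Well_order card_order_on_well_order_on[OF assms(1)]]
    unfolding unbounded_family_def by blast
  then have "|B\<^sub>0| =o c" using assms(3,4) ordIso_iff_ordLeq by blast
  then show ?thesis unfolding bnum_is_def using ge assms(3) by blast
qed

lemma bnum_is_squeeze:
  assumes "Card_order c" "\<And>f g. R f g \<Longrightarrow> R' f g"
    and "\<And>B. B \<subseteq> F \<Longrightarrow> |B| <o c \<Longrightarrow> \<exists>g\<in>F. \<forall>f\<in>B. R f g"
    and "unbounded_family R' F B\<^sub>0" "|B\<^sub>0| \<le>o c"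
  shows "bnum_is R F c \<and> bnum_is R' F c"
proof
  have "unbounded_family R F B\<^sub>0" using assms(2,4) unfolding unbounded_family_def by blast
  then show "bnum_is R F c" using bnum_isI[OF assms(1)] assms(3,5) by blast
  have "\<exists>g\<in>F. \<forall>f\<in>B. R' f g" if "B \<subseteq> F" "|B| <o c" for B
    using assms(3)[OF that] assms(2) by blast
  then show "bnum_is R' F c" using bnum_isI[OF assms(1)] assms(4,5) by blast
qed

lemma funs_pointwise_bound:
  assumes "Card_order k" "regularCard k"
    and "\<And>\<alpha>. \<alpha> \<in> Field m \<Longrightarrow> S \<alpha> \<subseteq> Field k \<and> |S \<alpha>| <o k"
  shows "\<exists>g\<in>funs m k. \<forall>\<alpha>\<in>Field m. \<forall>x\<in>S \<alpha>. (x, g \<alpha>) \<in> k"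
proof -
  have "\<forall>\<alpha>\<in>Field m. \<exists>a. a \<in> Field k \<and> (\<forall>x\<in>S \<alpha>. (x, a) \<in> k)"
    using regularCard_small_bounded[OF assms(1,2)] assms(3) by blast
  from bchoice[OF this] obtain g where g: "\<forall>\<alpha>\<in>Field m. g \<alpha> \<in> Field k \<and> (\<forall>x\<in>S \<alpha>. (x, g \<alpha>) \<in> k)"
    by blast
  then show ?thesis
    by (intro bexI[of _ "restrict g (Field m)"]) (auto simp: funs_def)
qed

lemma le_all_bounded:
  assumes "Card_order k" "regularCard k" "B \<subseteq> funs m k" "|B| <o k"
  shows "\<exists>g\<in>funs m k. \<forall>f\<in>B. le_all m k f g"
proof -
  have "(\<lambda>f. f \<alpha>) ` B \<subseteq> Field k \<and> |(\<lambda>f. f \<alpha>) ` B| <o k" if "\<alpha> \<in> Field m" for \<alpha>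
  proof
    show "(\<lambda>f. f \<alpha>) ` B \<subseteq> Field k" using assms(3) that unfolding funs_def by auto
    show "|(\<lambda>f. f \<alpha>) ` B| <o k" using card_of_image assms(4) by (rule ordLeq_ordLess_trans)
  qed
  from funs_pointwise_bound[where S = "\<lambda>\<alpha>. (\<lambda>f. f \<alpha>) ` B", OF assms(1,2) this]
  obtain g where "g \<in> funs m k" "\<forall>\<alpha>\<in>Field m. \<forall>x\<in>(\<lambda>f. f \<alpha>) ` B. (x, g \<alpha>) \<in> k"
    by blast
  then show ?thesis unfolding le_all_def by blast
qed

lemma cf_is_index_map:
  assumes "Card_order k" "infinite (Field k)" "Card_order m" "cf_is m k"
  obtains \<tau> where "\<forall>\<alpha>\<in>Field m. \<tau> \<alpha> \<in> Field k"
    and "\<forall>\<xi>\<in>Field k. \<exists>\<beta>\<in>Field m. \<forall>\<alpha>\<in>Field m. (\<tau> \<alpha>, \<xi>) \<in> k \<longrightarrow> (\<alpha>, \<beta>) \<in> m"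
proof -
  obtain K where K: "K \<subseteq> Field m" "cofinal K m" "|K| =o k"
    using assms(4) unfolding cf_is_def by blast
  have "|Field k| =o |K|"
    using card_of_Field_ordIso[OF assms(1)] ordIso_symmetric[OF K(3)] by (rule ordIso_transitive)
  from card_of_ordIso[THEN iffD2, OF this] obtain c where c: "bij_betw c (Field k) K"
    by blast
  then have cK: "c ` Field k = K" by (simp add: bij_betw_def)
  have "\<forall>\<alpha>\<in>Field m. \<exists>\<xi>. \<xi> \<in> Field k \<and> (\<alpha>, c \<xi>) \<in> m"
  proof
    fix \<alpha> assume "\<alpha> \<in> Field m"
    then obtain b where "b \<in> K" "(\<alpha>, b) \<in> m" using K(2) unfolding cofinal_def by blast
    then show "\<exists>\<xi>. \<xi> \<in> Field k \<and> (\<alpha>, c \<xi>) \<in> m" using cK by blast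
  qed
  from bchoice[OF this] obtain \<tau> where \<tau>: "\<forall>\<alpha>\<in>Field m. \<tau> \<alpha> \<in> Field k \<and> (\<alpha>, c (\<tau> \<alpha>)) \<in> m"
    by blast
  have bounded: "\<exists>\<beta>\<in>Field m. \<forall>\<alpha>\<in>Field m. (\<tau> \<alpha>, \<xi>) \<in> k \<longrightarrow> (\<alpha>, \<beta>) \<in> m"
    if "\<xi> \<in> Field k" for \<xi>
  proof -
    have "c ` under k \<xi> \<subseteq> Field m"
      using image_mono[OF under_Field, of c k \<xi>] cK K(1) by blast
    moreover have "|c ` under k \<xi>| <o k"
      using card_of_image card_of_under_ordLess[OF assms(1,2) that] by (rule ordLeq_ordLess_trans)
    ultimately obtain \<beta> where \<beta>: "\<beta> \<in> Field m" "\<forall>\<zeta>\<in>c ` under k \<xi>. (\<zeta>, \<beta>) \<in> m"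
      using cf_is_small_bounded[OF assms(3,4)] by blast
    show ?thesis
    proof (intro bexI[OF _ \<beta>(1)] ballI impI)
      fix \<alpha> assume \<alpha>: "\<alpha> \<in> Field m" "(\<tau> \<alpha>, \<xi>) \<in> k"
      have "(\<alpha>, c (\<tau> \<alpha>)) \<in> m" using \<tau> \<alpha>(1) by blast
      moreover have "(c (\<tau> \<alpha>), \<beta>) \<in> m" using \<beta>(2) \<alpha>(2) unfolding under_def by blast
      ultimately show "(\<alpha>, \<beta>) \<in> m" by (rule Card_order_transD[OF assms(3)])
    qed
  qed
  show thesis
  proof (rule that)
    show "\<forall>\<alpha>\<in>Field m. \<tau> \<alpha> \<in> Field k" using \<tau> by blast
    show "\<forall>\<xi>\<in>Field k. \<exists>\<beta>\<in>Field m. \<forall>\<alpha>\<in>Field m. (\<tau> \<alpha>, \<xi>) \<in> k \<longrightarrow> (\<alpha>, \<beta>) \<in> m"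
      using bounded by blast
  qed
qed

lemma le_bd_bounded:
  assumes "Card_order k" "infinite (Field k)" "regularCard k" "Card_order m" "cf_is m k"
    and "B \<subseteq> funs m k" "|B| \<le>o k"
  shows "\<exists>g\<in>funs m k. \<forall>f\<in>B. le_bd m k f g"
proof -
  obtain \<tau> where \<tau>: "\<forall>\<alpha>\<in>Field m. \<tau> \<alpha> \<in> Field k"
    and \<tau>_bounded: "\<forall>\<xi>\<in>Field k. \<exists>\<beta>\<in>Field m. \<forall>\<alpha>\<in>Field m. (\<tau> \<alpha>, \<xi>) \<in> k \<longrightarrow> (\<alpha>, \<beta>) \<in> m"
    using cf_is_index_map[OF assms(1,2,4,5)] by blast
  obtain e where e: "inj_on e B" "e ` B \<subseteq> Field k"
    using card_of_ordLeq_inj_Field[OF assms(1,7)] by blast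
  define S where "S \<alpha> = (\<lambda>f. f \<alpha>) ` {f\<in>B. (e f, \<tau> \<alpha>) \<in> k}" for \<alpha>
  have "S \<alpha> \<subseteq> Field k \<and> |S \<alpha>| <o k" if \<alpha>: "\<alpha> \<in> Field m" for \<alpha>
  proof
    show "S \<alpha> \<subseteq> Field k" using assms(6) \<alpha> unfolding S_def funs_def by auto
    have "|{f\<in>B. (e f, \<tau> \<alpha>) \<in> k}| <o k"
      using card_of_inj_below_ordLess[OF assms(1,2) e(1)] \<tau> \<alpha> by blast
    then show "|S \<alpha>| <o k" unfolding S_def by (rule ordLeq_ordLess_trans[OF card_of_image])
  qed
  from funs_pointwise_bound[where S = S, OF assms(1,3) this]
  obtain g where g: "g \<in> funs m k" "\<forall>\<alpha>\<in>Field m. \<forall>x\<in>S \<alpha>. (x, g \<alpha>) \<in> k"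
    by blast
  have "le_bd m k f g" if f: "f \<in> B" for f
  proof -
    obtain \<beta> where \<beta>: "\<beta> \<in> Field m" "\<forall>\<alpha>\<in>Field m. (\<tau> \<alpha>, e f) \<in> k \<longrightarrow> (\<alpha>, \<beta>) \<in> m"
      using \<tau>_bounded e(2) f by blast
    have "(\<alpha>, \<beta>) \<in> m" if \<alpha>: "\<alpha> \<in> below_set m k f g" for \<alpha>
    proof (cases "(\<tau> \<alpha>, e f) \<in> k")
      case True
      then show ?thesis using \<alpha> \<beta>(2) unfolding below_set_def by blast
    next
      case False
      have \<alpha>_m: "\<alpha> \<in> Field m" using \<alpha> unfolding below_set_def by blast
      have "(e f, \<tau> \<alpha>) \<in> k"
        using Card_order_notin_less[OF assms(1) _ _ False] \<tau> \<alpha>_m e(2) f by blast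
      then have "f \<alpha> \<in> S \<alpha>" using f unfolding S_def by blast
      then have "(f \<alpha>, g \<alpha>) \<in> k" using g(2) \<alpha>_m by blast
      then show ?thesis
        using \<alpha> Card_order_antisymD[OF assms(1)] unfolding below_set_def by blast
    qed
    then show ?thesis using \<beta>(1) unfolding le_bd_def by blast
  qed
  then show ?thesis using g(1) by blast
qed

lemma cf_is_uniformly_bounded_subfamily:
  assumes k: "Card_order k" "infinite (Field k)"
    and m: "Card_order m" "cf_is m k"
    and s: "Card_order s" "regularCard s" "k <o s"
    and small: "\<forall>\<xi>\<in>Field s. |E \<xi>| <o m"
  shows "\<exists>\<eta>\<in>Field s. \<exists>b\<in>Field m. \<exists>Y\<subseteq>under s \<eta>. |Y| =o k \<and> (\<forall>\<xi>\<in>Y. |E \<xi>| \<le>o |under m b| )"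
proof -
  obtain K where K: "K \<subseteq> Field m" "cofinal K m" "|K| =o k"
    using m(2) unfolding cf_is_def by blast
  have "\<forall>\<xi>\<in>Field s. \<exists>b. b \<in> K \<and> |E \<xi>| \<le>o |under m b|"
    using cofinal_card_of_bound[OF m(1) K(2)] small by blast
  from bchoice[OF this] obtain \<sigma> where \<sigma>: "\<forall>\<xi>\<in>Field s. \<sigma> \<xi> \<in> K \<and> |E \<xi>| \<le>o |under m (\<sigma> \<xi>)|"
    by blast
  have "k <o |Field s|"
    using s(3) ordIso_symmetric[OF card_of_Field_ordIso[OF s(1)]] by (rule ordLess_ordIso_trans)
  moreover have "\<forall>\<xi>\<in>Field s. \<sigma> \<xi> \<in> K" using \<sigma> by blast
  ultimately obtain b Y where b: "b \<in> K" and Y: "Y \<subseteq> Field s" "|Y| =o k" "\<forall>\<xi>\<in>Y. \<sigma> \<xi> = b"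
    using card_of_fiber_ordIso[OF k ordIso_imp_ordLeq[OF K(3)]] by blast
  obtain \<eta> where \<eta>: "\<eta> \<in> Field s" "Y \<subseteq> under s \<eta>"
    using regularCard_small_bounded[OF s(1,2) Y(1) ordIso_ordLess_trans[OF Y(2) s(3)]]
    unfolding under_def by blast
  have "\<forall>\<xi>\<in>Y. |E \<xi>| \<le>o |under m b|" using \<sigma> Y(1,3) by auto
  then show ?thesis using \<eta> b K(1) Y(2) by blast
qed

lemma le_card_unbounded_if_columns:
  fixes F :: "'s \<Rightarrow> 'm \<Rightarrow> 'k" and s :: "'s rel"
  assumes k: "Card_order k" "infinite (Field k)"
    and m: "Card_order m" "infinite (Field m)" "cf_is m k" "k <o m"
    and s: "Card_order s" "regularCard s" "k <o s"
    and columns: "\<And>\<eta>. \<eta> \<in> Field s \<Longrightarrow> \<exists>A\<subseteq>Field m. |Field m| \<le>o |A| \<and>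
      (\<exists>\<pi>. inj_on \<pi> (under s \<eta>) \<and> \<pi> ` under s \<eta> \<subseteq> Field k \<and>
           (\<forall>\<xi>\<in>under s \<eta>. \<forall>\<alpha>\<in>A. F \<xi> \<alpha> = \<pi> \<xi>))"
  shows "\<not> (\<exists>g\<in>funs m k. \<forall>\<xi>\<in>Field s. le_card m m k (F \<xi>) g)"
proof
  assume "\<exists>g\<in>funs m k. \<forall>\<xi>\<in>Field s. le_card m m k (F \<xi>) g"
  then obtain g where g: "g \<in> funs m k" "\<forall>\<xi>\<in>Field s. |below_set m k (F \<xi>) g| <o m"
    unfolding le_card_def by blast
  from cf_is_uniformly_bounded_subfamily[OF k m(1,3) s g(2)]
  obtain \<eta> b Y where \<eta>: "\<eta> \<in> Field s" and b: "b \<in> Field m" and Y: "Y \<subseteq> under s \<eta>" "|Y| =o k"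
    and Y_bound: "\<forall>\<xi>\<in>Y. |below_set m k (F \<xi>) g| \<le>o |under m b|"
    by blast
  obtain A \<pi> where A: "A \<subseteq> Field m" "|Field m| \<le>o |A|"
    and \<pi>: "inj_on \<pi> (under s \<eta>)" "\<pi> ` under s \<eta> \<subseteq> Field k"
    and F: "\<forall>\<xi>\<in>under s \<eta>. \<forall>\<alpha>\<in>A. F \<xi> \<alpha> = \<pi> \<xi>"
    using columns[OF \<eta>] by blast
  \<comment> \<open>At a point of the column where \<open>g\<close> dominates every \<open>F \<xi>\<close>, \<open>\<xi> \<in> Y\<close>, it would bound the
      \<open>k\<close> distinct values \<open>\<pi> \<xi>\<close>.\<close>
  have "A \<subseteq> (\<Union>\<xi>\<in>Y. below_set m k (F \<xi>) g)"
  proof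
    fix \<alpha> assume \<alpha>: "\<alpha> \<in> A"
    have "inj_on \<pi> Y" using \<pi>(1) Y(1) by (rule inj_on_subset)
    moreover have "\<pi> ` Y \<subseteq> Field k" using \<pi>(2) Y(1) by blast
    moreover have "g \<alpha> \<in> Field k" using g(1) A(1) \<alpha> unfolding funs_def by blast
    ultimately obtain \<xi> where \<xi>: "\<xi> \<in> Y" "(g \<alpha>, \<pi> \<xi>) \<in> k" "g \<alpha> \<noteq> \<pi> \<xi>"
      using Card_order_inj_image_unbounded[OF k Y(2)] by blast
    moreover have "F \<xi> \<alpha> = \<pi> \<xi>" using F Y(1) \<xi>(1) \<alpha> by blast
    ultimately have "\<alpha> \<in> below_set m k (F \<xi>) g"
      using \<alpha> A(1) unfolding below_set_def by auto
    then show "\<alpha> \<in> (\<Union>\<xi>\<in>Y. below_set m k (F \<xi>) g)" using \<xi>(1) by blast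
  qed
  moreover have "|\<Union>\<xi>\<in>Y. below_set m k (F \<xi>) g| <o m"
  proof (rule card_of_UNION_ordLess_bound[OF m(1,2) _ _ card_of_under_ordLess[OF m(1,2) b] Y_bound])
    show "infinite Y"
      using card_of_ordIso_finite_Field[OF k(1) ordIso_symmetric[OF Y(2)]] k(2) by simp
    show "|Y| <o m" using Y(2) m(4) by (rule ordIso_ordLess_trans)
  qed
  ultimately have "|A| <o m" by (rule ordLeq_ordLess_trans[OF card_of_mono1])
  with A(2) have "|Field m| <o m" by (rule ordLeq_ordLess_trans)
  then show False using card_of_Field_ordIso[OF m(1)] not_ordLess_ordIso by blast
qed

lemma constant_funs_unbounded_le_card:
  assumes k: "Card_order k" "infinite (Field k)" and m: "Card_order m" "k <o m"
  shows "unbounded_family (le_card k m k) (funs m k) ((\<lambda>\<xi>. restrict (\<lambda>_. \<xi>) (Field m)) ` Field k)"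
proof -
  have "\<not> (\<forall>\<xi>\<in>Field k. le_card k m k (restrict (\<lambda>_. \<xi>) (Field m)) g)" if g: "g \<in> funs m k" for g
  proof
    let ?E = "\<lambda>\<xi>. below_set m k (restrict (\<lambda>_. \<xi>) (Field m)) g"
    assume "\<forall>\<xi>\<in>Field k. le_card k m k (restrict (\<lambda>_. \<xi>) (Field m)) g"
    then have "\<forall>\<xi>\<in>Field k. |?E \<xi>| \<le>o |Field k|"
      unfolding le_card_def using card_of_Field_ordIso[OF k(1)]
      by (metis ordIso_symmetric ordLess_imp_ordLeq ordLeq_ordIso_trans)
    then have "|\<Union>\<xi>\<in>Field k. ?E \<xi>| \<le>o |Field k|"
      by (intro card_of_UNION_ordLeq_infinite[OF k(2) ordLeq_refl[OF card_of_Card_order]])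
    moreover have "Field m \<subseteq> (\<Union>\<xi>\<in>Field k. ?E \<xi>)"
    proof
      fix \<alpha> assume "\<alpha> \<in> Field m"
      moreover obtain \<xi> where "\<xi> \<in> Field k" "g \<alpha> \<noteq> \<xi>" "(g \<alpha>, \<xi>) \<in> k"
        using infinite_Card_order_limit[OF k] g \<open>\<alpha> \<in> Field m\<close> unfolding funs_def by blast
      ultimately show "\<alpha> \<in> (\<Union>\<xi>\<in>Field k. ?E \<xi>)" unfolding below_set_def by auto
    qed
    ultimately have "m \<le>o k"
      using card_of_mono1 card_of_Field_ordIso[OF m(1)] card_of_Field_ordIso[OF k(1)]
      by (metis ordIso_iff_ordLeq ordLeq_transitive)
    then show False using m(2) not_ordLess_ordLeq by blast
  qed
  then show ?thesis unfolding unbounded_family_def funs_def by auto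
qed

lemma le_card_unbounded_family_cardSuc:
  assumes k: "Card_order k" "infinite (Field k)"
    and m: "Card_order m" "infinite (Field m)" "\<not> regularCard m" "cf_is m k"
  shows "\<exists>B. unbounded_family (le_card m m k) (funs m k) B \<and> |B| \<le>o cardSuc k"
proof -
  let ?s = "cardSuc k"
  have km: "k <o m" using cf_is_ordLess_singular[OF m(1,3,4)] .
  have s_card: "Card_order ?s" by (rule cardSuc_Card_order[OF k(1)])
  have s_inf: "infinite (Field ?s)" using cardSuc_finite[OF k(1)] k(2) by simp
  have s_reg: "regularCard ?s" by (rule infinite_cardSuc_regularCard[OF k(2,1)])
  have ks: "k <o ?s" by (rule cardSuc_greater[OF k(1)])
  have "Field ?s \<noteq> {}" using s_inf by auto
  then obtain p where p: "bij_betw p (Field m) (Field ?s \<times> Field m)"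
    using infinite_bij_betw_Times[OF m(2)]
      card_of_mono2[OF ordLess_imp_ordLeq[OF cardSuc_ordLess_singular[OF k m(1,3) km]]] by blast
  have "\<forall>\<eta>\<in>Field ?s. \<exists>\<pi>. inj_on \<pi> (under ?s \<eta>) \<and> \<pi> ` under ?s \<eta> \<subseteq> Field k"
    using card_of_ordLeq_inj_Field[OF k(1) card_of_under_cardSuc[OF k]] by blast
  from bchoice[OF this] obtain \<pi> where
    \<pi>: "\<forall>\<eta>\<in>Field ?s. inj_on (\<pi> \<eta>) (under ?s \<eta>) \<and> \<pi> \<eta> ` under ?s \<eta> \<subseteq> Field k"
    by blast
  obtain z where z: "z \<in> Field k" using k(2) by (metis finite.emptyI ex_in_conv)
  \<comment> \<open>\<open>p\<close> splits \<open>m\<close> into columns indexed by \<open>cardSuc k\<close>; on the column \<open>\<eta>\<close> the functions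
      \<open>F \<xi>\<close>, \<open>\<xi> \<le> \<eta>\<close>, are constant with pairwise distinct values.\<close>
  define F where "F \<xi> = restrict (\<lambda>\<alpha>. if \<xi> \<in> under ?s (fst (p \<alpha>)) then \<pi> (fst (p \<alpha>)) \<xi> else z)
    (Field m)" for \<xi>
  have p_fst: "fst (p \<alpha>) \<in> Field ?s" if "\<alpha> \<in> Field m" for \<alpha>
  proof -
    have "p \<alpha> \<in> Field ?s \<times> Field m" using p that unfolding bij_betw_def by blast
    then show ?thesis by (simp add: mem_Times_iff)
  qed
  have F_funs: "F ` Field ?s \<subseteq> funs m k"
  proof
    fix f assume "f \<in> F ` Field ?s"
    then obtain \<xi> where f: "f = F \<xi>" by blast
    have "(if \<xi> \<in> under ?s (fst (p \<alpha>)) then \<pi> (fst (p \<alpha>)) \<xi> else z) \<in> Field k"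
      if "\<alpha> \<in> Field m" for \<alpha>
      using \<pi> p_fst[OF that] z by auto
    then show "f \<in> funs m k" unfolding f F_def funs_def by simp
  qed
  have "\<not> (\<exists>g\<in>funs m k. \<forall>\<xi>\<in>Field ?s. le_card m m k (F \<xi>) g)"
  proof (rule le_card_unbounded_if_columns[OF k m(1,2,4) km s_card s_reg ks])
    fix \<eta> assume \<eta>: "\<eta> \<in> Field ?s"
    let ?A = "{\<alpha>\<in>Field m. fst (p \<alpha>) = \<eta>}"
    have F_column: "\<forall>\<xi>\<in>under ?s \<eta>. \<forall>\<alpha>\<in>?A. F \<xi> \<alpha> = \<pi> \<eta> \<xi>" unfolding F_def by simp
    show "\<exists>A\<subseteq>Field m. |Field m| \<le>o |A| \<and> (\<exists>\<pi>'. inj_on \<pi>' (under ?s \<eta>) \<and>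
      \<pi>' ` under ?s \<eta> \<subseteq> Field k \<and> (\<forall>\<xi>\<in>under ?s \<eta>. \<forall>\<alpha>\<in>A. F \<xi> \<alpha> = \<pi>' \<xi>))"
    proof (intro exI[of _ ?A] conjI exI[of _ "\<pi> \<eta>"])
      show "|Field m| \<le>o |?A|" by (rule card_of_fst_fiber[OF p \<eta>])
      show "inj_on (\<pi> \<eta>) (under ?s \<eta>)" "\<pi> \<eta> ` under ?s \<eta> \<subseteq> Field k" using \<pi> \<eta> by blast+
    qed (use F_column in blast)+
  qed
  then have "unbounded_family (le_card m m k) (funs m k) (F ` Field ?s)"
    using F_funs unfolding unbounded_family_def by blast
  moreover have "|F ` Field ?s| \<le>o ?s"
    using card_of_image card_of_Field_ordIso[OF s_card] by (rule ordLeq_ordIso_trans)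
  ultimately show ?thesis by blast
qed

theorem mainTheorem17:
  fixes k :: "'k rel" and m :: "'m rel"
  assumes "Card_order k" and "infinite (Field k)" and "regularCard k"
    and "Card_order m" and "infinite (Field m)" and "\<not> regularCard m"
    and "cf_is m k"
  shows "bnum_is (le_card k m k) (funs m k) k
    \<and> bnum_is (le_all m k) (funs m k) k
    \<and> bnum_is (le_card m m k) (funs m k) (cardSuc k)
    \<and> bnum_is (le_bd m k) (funs m k) (cardSuc k)"
proof -
  note k = assms(1-3) and m = assms(4-7)
  define C where "C = (\<lambda>\<xi>. restrict (\<lambda>_. \<xi>) (Field m)) ` Field k"
  have C: "unbounded_family (le_card k m k) (funs m k) C" "|C| \<le>o k"
    unfolding C_def
    using constant_funs_unbounded_le_card[OF k(1,2) m(1) cf_is_ordLess_singular[OF m(1,3,4)]]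
      ordLeq_ordIso_trans[OF card_of_image card_of_Field_ordIso[OF k(1)]] by blast+
  obtain D where D: "unbounded_family (le_card m m k) (funs m k) D" "|D| \<le>o cardSuc k"
    using le_card_unbounded_family_cardSuc[OF k(1,2) m] by blast
  have bounded_all: "\<exists>g\<in>funs m k. \<forall>f\<in>B. le_all m k f g"
    if "B \<subseteq> funs m k" "|B| <o k" for B
    using le_all_bounded[OF k(1,3) that] .
  have bounded_bd: "\<exists>g\<in>funs m k. \<forall>f\<in>B. le_bd m k f g"
    if "B \<subseteq> funs m k" "|B| <o cardSuc k" for B
    using le_bd_bounded[OF k m(1,4) that(1)]
      cardSuc_ordLeq_ordLess[OF k(1) card_of_Card_order, THEN iffD1, OF that(2)] .
  have all_card: "le_card k m k f g" if "le_all m k f g" for f g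
    using le_all_imp_le_card[OF k(1,1,2) that] .
  have bd_card: "le_card m m k f g" if "le_bd m k f g" for f g
    using le_bd_imp_le_card[OF m(1,2) that] .
  show ?thesis
    using bnum_is_squeeze[OF k(1) all_card bounded_all C]
      bnum_is_squeeze[OF cardSuc_Card_order[OF k(1)] bd_card bounded_bd D] by blast
qed

end
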